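(* Let $n\ge0$ be an integer with $\chi_n<c^2$, and let $x_1<x_2<\dots$ be the roots of $\psi_n$ in $(1,\infty)$. Then $$x_2-x_1\le x_3-x_2\le\dots\le x_{k+1}-x_k\le\dots\le\frac{\pi}{c}.$$
   Context: For a real number $c>0$, let $\psi_0,\psi_1,\dots$ be the prolate spheroidal wave functions of band limit $c$: the real $L^2[-1,1]$-normalized eigenfunctions of $F_c[\varphi](x)=\int_{-1}^1\varphi(t)e^{icxt}\,dt$ with eigenvalues $\lambda_n$ ordered by $|\lambda_n|\ge|\lambda_{n+1}|$, extended to entire functions by $\lambda_n\psi_n(x)=\int_{-1}^1\psi_n(t)e^{icxt}\,dt$. $\chi_0<\chi_1<\dots$ are the positive numbers such that $\psi_n$ satisfies $(1-x^2)\psi''(x)-2x\psi'(x)+(\chi_n-c^2x^2)\psi(x)=0$ for all $x$. (Each $\psi_n$ has infinitely many roots in $(1,\infty)$.) *)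

theory Defs
  imports "HOL-Analysis.Analysis"
begin

definition Fc :: "real \<Rightarrow> (real \<Rightarrow> real) \<Rightarrow> real \<Rightarrow> complex" where
  "Fc c \<phi> x = integral {-1..1} (\<lambda>t. complex_of_real (\<phi> t) * exp (\<i> * complex_of_real (c * x * t)))"

text \<open>psi, lam, chi are the prolate spheroidal wave functions of band limit c
  (extended to the real line), their eigenvalues with respect to F_c, and the
  eigenvalues of the differential operator.\<close>
definition pswf_system ::
  "real \<Rightarrow> (nat \<Rightarrow> real \<Rightarrow> real) \<Rightarrow> (nat \<Rightarrow> complex) \<Rightarrow> (nat \<Rightarrow> real) \<Rightarrow> bool" where
  "pswf_system c \<psi> lam chi \<longleftrightarrow>
     0 < c \<and>
     (\<forall>n. continuous_on UNIV (\<psi> n)) \<and>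
     (\<forall>n. integral {-1..1} (\<lambda>t. (\<psi> n t)^2) = 1) \<and>
     (\<forall>n x. lam n * complex_of_real (\<psi> n x) = Fc c (\<psi> n) x) \<and>
     (\<forall>n. norm (lam n) \<ge> norm (lam (Suc n))) \<and>
     (\<forall>\<phi> \<mu>. continuous_on {-1..1} \<phi> \<and> (\<exists>x\<in>{-1..1}. \<phi> x \<noteq> 0) \<and>
        (\<forall>x\<in>{-1..1}. \<mu> * complex_of_real (\<phi> x) = Fc c \<phi> x)
        \<longrightarrow> (\<exists>n a. \<forall>x\<in>{-1..1}. \<phi> x = a * \<psi> n x)) \<and>
     strict_mono chi \<and> (\<forall>n. 0 < chi n) \<and>
     (\<forall>n x. \<psi> n differentiable (at x) \<and> deriv (\<psi> n) differentiable (at x)) \<and>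
     (\<forall>n x. (1 - x^2) * deriv (deriv (\<psi> n)) x - 2 * x * deriv (\<psi> n) x
              + (chi n - c^2 * x^2) * \<psi> n x = 0)"

end

theory Submission
  imports Defs
begin

text \<open>On \<open>(1, \<infinity>)\<close> the substitution \<open>u(x) = \<surd>(x\<^sup>2 - 1) \<psi>\<^sub>n(x)\<close> turns the prolate
  differential equation into the normal form \<open>u'' + Q u = 0\<close> with
  \<open>Q(x) = c\<^sup>2 + (c\<^sup>2 - \<chi>\<^sub>n)/(x\<^sup>2 - 1) + 1/(x\<^sup>2 - 1)\<^sup>2\<close>, and \<open>u\<close> has the same roots as \<open>\<psi>\<^sub>n\<close>.
  If \<open>\<chi>\<^sub>n < c\<^sup>2\<close>, then \<open>Q > c\<^sup>2\<close> and \<open>Q\<close> is strictly decreasing. Sturm comparison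
  with \<open>sin (c (x - x\<^sub>k))\<close> bounds every gap between consecutive roots by \<open>\<pi>/c\<close>, and
  comparison of \<open>u\<close> with its own translate \<open>u(\<cdot> + x\<^sub>k\<^sub>+\<^sub>1 - x\<^sub>k)\<close>, whose potential is
  smaller, shows that the gaps cannot shrink.\<close>

lemma deriv_nonpos_at_zero_of_pos_left:
  fixes g :: "real \<Rightarrow> real"
  assumes "a < e" "(g has_real_derivative D) (at e)" "g e = 0"
    and "\<forall>t\<in>{a<..<e}. 0 < g t"
  shows "D \<le> 0"
proof (rule ccontr)
  assume "\<not> D \<le> 0"
  then obtain d where d: "d > 0" "\<forall>h>0. h < d \<longrightarrow> g (e - h) < g e"
    using DERIV_pos_inc_left[OF assms(2)] by auto
  define h where "h = min (d/2) ((e - a)/2)"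
  have "0 < h" "h < d" "h < e - a" using d assms(1) by (auto simp: h_def min_def)
  then have "g (e - h) < 0" "e - h \<in> {a<..<e}" using d assms(3) by auto
  then show False using assms(4) by fastforce
qed

lemma connected_nonvanishing_has_sign:
  fixes u :: "'a::topological_space \<Rightarrow> real"
  assumes "connected S" "continuous_on S u" "\<forall>t\<in>S. u t \<noteq> 0"
  shows "\<exists>\<sigma>. \<forall>t\<in>S. 0 < \<sigma> * u t"
proof -
  have conn: "connected (u ` S)" using connected_continuous_image assms(1,2) by blast
  have "(\<forall>t\<in>S. 0 < u t) \<or> (\<forall>t\<in>S. u t < 0)"
  proof (rule ccontr)
    assume "\<not> ?thesis"
    then obtain p q where "p \<in> S" "q \<in> S" "u p \<le> 0" "0 \<le> u q" by force
    then have "0 \<in> u ` S"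
      using conn unfolding connected_iff_interval by blast
    then show False using assms(3) by auto
  qed
  then show ?thesis by (metis mult_1 mult_minus1 neg_0_less_iff_less)
qed

lemma continuous_on_of_has_real_derivative:
  assumes "\<forall>t\<in>S. (f has_real_derivative f' t) (at t)"
  shows "continuous_on S f"
  using assms DERIV_isCont continuous_at_imp_continuous_on by blast

text \<open>The Wronskian \<open>W = f' g - f g'\<close> vanishes at \<open>a\<close>, has derivative
  \<open>(Q\<^sub>g - Q\<^sub>f) f g < 0\<close> on \<open>(a, e)\<close>, but \<open>W(e) = - f(e) g'(e) \<ge> 0\<close>.\<close>

lemma sturm_comparison_pos:
  fixes f f' g g' Qf Qg :: "real \<Rightarrow> real"
  assumes ae: "a < e"
    and df: "\<forall>t\<in>{a..e}. (f has_real_derivative f' t) (at t)"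
    and df': "\<forall>t\<in>{a..e}. (f' has_real_derivative - (Qf t * f t)) (at t)"
    and dg: "\<forall>t\<in>{a..e}. (g has_real_derivative g' t) (at t)"
    and dg': "\<forall>t\<in>{a..e}. (g' has_real_derivative - (Qg t * g t)) (at t)"
    and Q: "\<forall>t\<in>{a<..<e}. Qg t < Qf t"
    and "f a = 0" "g a = 0" "g e = 0"
    and fpos: "\<forall>t\<in>{a<..e}. 0 < f t" and gpos: "\<forall>t\<in>{a<..<e}. 0 < g t"
  shows False
proof -
  define W where "W t = f' t * g t - f t * g' t" for t
  have dW: "(W has_real_derivative (Qg t - Qf t) * f t * g t) (at t)" if "a \<le> t" "t \<le> e" for t
    unfolding W_def[abs_def] using that df df' dg dg'
    by (auto intro!: derivative_eq_intros simp: algebra_simps)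
  obtain z where z: "a < z" "z < e" "W e - W a = (e - a) * ((Qg z - Qf z) * f z * g z)"
    using MVT2[OF ae dW] by blast
  have "0 < f z * g z" using fpos gpos z by auto
  then have "(Qg z - Qf z) * f z * g z < 0"
    using Q z by (simp add: mult.assoc mult_neg_pos)
  then have "(e - a) * ((Qg z - Qf z) * f z * g z) < 0" using ae by (simp add: mult_pos_neg)
  then have "W e < W a" using z by linarith
  moreover have "W a = 0" using \<open>f a = 0\<close> \<open>g a = 0\<close> by (simp add: W_def)
  moreover have "0 \<le> W e"
  proof -
    have "g' e \<le> 0"
      using deriv_nonpos_at_zero_of_pos_left[OF ae _ \<open>g e = 0\<close> gpos] dg ae by auto
    moreover have "0 < f e" using fpos ae by auto
    ultimately show ?thesis using \<open>g e = 0\<close> by (simp add: W_def mult_le_0_iff)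
  qed
  ultimately show False by linarith
qed

lemma sturm_comparison:
  fixes f f' g g' Qf Qg :: "real \<Rightarrow> real"
  assumes ae: "a < e"
    and df: "\<forall>t\<in>{a..e}. (f has_real_derivative f' t) (at t)"
    and df': "\<forall>t\<in>{a..e}. (f' has_real_derivative - (Qf t * f t)) (at t)"
    and dg: "\<forall>t\<in>{a..e}. (g has_real_derivative g' t) (at t)"
    and dg': "\<forall>t\<in>{a..e}. (g' has_real_derivative - (Qg t * g t)) (at t)"
    and Q: "\<forall>t\<in>{a<..<e}. Qg t < Qf t"
    and "f a = 0" "g a = 0" "g e = 0"
    and g_nz: "\<forall>t\<in>{a<..<e}. g t \<noteq> 0"
  shows "\<exists>t\<in>{a<..e}. f t = 0"
proof (rule ccontr)
  assume "\<not> ?thesis"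
  moreover have "continuous_on {a<..e} f"
    by (rule continuous_on_subset[OF continuous_on_of_has_real_derivative[OF df]]) auto
  ultimately obtain \<sigma> where \<sigma>: "\<forall>t\<in>{a<..e}. 0 < \<sigma> * f t"
    using connected_nonvanishing_has_sign[of "{a<..e}" f] by auto
  have "continuous_on {a<..<e} g"
    by (rule continuous_on_subset[OF continuous_on_of_has_real_derivative[OF dg]]) auto
  then obtain \<tau> where \<tau>: "\<forall>t\<in>{a<..<e}. 0 < \<tau> * g t"
    using connected_nonvanishing_has_sign[of "{a<..<e}" g] g_nz by auto
  show False
  proof (rule sturm_comparison_pos[OF ae _ _ _ _ Q _ _ _ \<sigma> \<tau>])
    show "\<forall>t\<in>{a..e}. ((\<lambda>t. \<sigma> * f t) has_real_derivative \<sigma> * f' t) (at t)"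
      "\<forall>t\<in>{a..e}. ((\<lambda>t. \<tau> * g t) has_real_derivative \<tau> * g' t) (at t)"
      using df dg by (auto intro: DERIV_cmult)
    show "\<forall>t\<in>{a..e}. ((\<lambda>t. \<sigma> * f' t) has_real_derivative - (Qf t * (\<sigma> * f t))) (at t)"
      "\<forall>t\<in>{a..e}. ((\<lambda>t. \<tau> * g' t) has_real_derivative - (Qg t * (\<tau> * g t))) (at t)"
      using df' dg' by (auto intro!: derivative_eq_intros simp: algebra_simps)
  qed (simp_all add: \<open>f a = 0\<close> \<open>g a = 0\<close> \<open>g e = 0\<close>)
qed

lemma zero_gap_le_pi_div:
  fixes u u' Q :: "real \<Rightarrow> real"
  assumes "0 < c" "a < b"
    and du: "\<forall>t\<in>{a..b}. (u has_real_derivative u' t) (at t)"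
    and du': "\<forall>t\<in>{a..b}. (u' has_real_derivative - (Q t * u t)) (at t)"
    and Q: "\<forall>t\<in>{a<..<b}. c\<^sup>2 < Q t"
    and "u a = 0" and u_nz: "\<forall>t\<in>{a<..<b}. u t \<noteq> 0"
  shows "b - a \<le> pi / c"
proof (rule ccontr)
  assume "\<not> b - a \<le> pi / c"
  define e where "e = a + pi / c"
  have "a < e" "e < b" using \<open>0 < c\<close> \<open>\<not> b - a \<le> pi / c\<close> by (auto simp: e_def)
  have "\<exists>t\<in>{a<..e}. u t = 0"
  proof (rule sturm_comparison[where g = "\<lambda>t. sin (c * (t - a))"
        and g' = "\<lambda>t. c * cos (c * (t - a))" and Qg = "\<lambda>_. c\<^sup>2"])
    show "\<forall>t\<in>{a..e}. (u has_real_derivative u' t) (at t)"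
      "\<forall>t\<in>{a..e}. (u' has_real_derivative - (Q t * u t)) (at t)"
      using du du' \<open>e < b\<close> by auto
    show "\<forall>t\<in>{a..e}. ((\<lambda>t. sin (c * (t - a))) has_real_derivative c * cos (c * (t - a))) (at t)"
      "\<forall>t\<in>{a..e}. ((\<lambda>t. c * cos (c * (t - a))) has_real_derivative
          - (c\<^sup>2 * sin (c * (t - a)))) (at t)"
      by (auto intro!: derivative_eq_intros simp: power2_eq_square)
    show "sin (c * (e - a)) = 0" using \<open>0 < c\<close> by (simp add: e_def)
    show "\<forall>t\<in>{a<..<e}. sin (c * (t - a)) \<noteq> 0"
    proof
      fix t assume "t \<in> {a<..<e}"
      then have "0 < c * (t - a)" "c * (t - a) < pi"
        using \<open>0 < c\<close> by (auto simp: e_def field_simps)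
      then show "sin (c * (t - a)) \<noteq> 0" using sin_gt_zero by fastforce
    qed
  qed (use \<open>a < e\<close> \<open>e < b\<close> Q \<open>u a = 0\<close> in auto)
  then show False using u_nz \<open>e < b\<close> by auto
qed

text \<open>The translate \<open>u(\<cdot> + (b - a))\<close> solves the equation with the smaller potential
  \<open>Q(\<cdot> + (b - a))\<close> and vanishes at \<open>a\<close> and \<open>a + (d - b)\<close>.\<close>

lemma zero_gaps_nondecreasing:
  fixes u u' Q :: "real \<Rightarrow> real"
  assumes "a < b" "b < d"
    and du: "\<forall>t\<in>{a..d}. (u has_real_derivative u' t) (at t)"
    and du': "\<forall>t\<in>{a..d}. (u' has_real_derivative - (Q t * u t)) (at t)"
    and Q: "strict_antimono_on {a..d} Q"
    and "u a = 0" "u b = 0" "u d = 0"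
    and nz_ab: "\<forall>t\<in>{a<..<b}. u t \<noteq> 0" and nz_bd: "\<forall>t\<in>{b<..<d}. u t \<noteq> 0"
  shows "b - a \<le> d - b"
proof (rule ccontr)
  assume "\<not> b - a \<le> d - b"
  define h where "h = b - a"
  define e where "e = a + (d - b)"
  have "a < e" "e < b" "0 < h" using assms(1,2) \<open>\<not> b - a \<le> d - b\<close> by (auto simp: e_def h_def)
  have "\<exists>t\<in>{a<..e}. u t = 0"
  proof (rule sturm_comparison[where g = "\<lambda>t. u (t + h)" and g' = "\<lambda>t. u' (t + h)"
        and Qg = "\<lambda>t. Q (t + h)"])
    show "\<forall>t\<in>{a..e}. (u has_real_derivative u' t) (at t)"
      "\<forall>t\<in>{a..e}. (u' has_real_derivative - (Q t * u t)) (at t)"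
      using du du' \<open>e < b\<close> assms(2) by auto
    show "\<forall>t\<in>{a..e}. ((\<lambda>t. u (t + h)) has_real_derivative u' (t + h)) (at t)"
      "\<forall>t\<in>{a..e}. ((\<lambda>t. u' (t + h)) has_real_derivative - (Q (t + h) * u (t + h))) (at t)"
      using du du' \<open>0 < h\<close> by (auto simp: DERIV_shift[symmetric] e_def h_def)
    show "\<forall>t\<in>{a<..<e}. Q (t + h) < Q t"
      using monotone_onD[OF Q] \<open>0 < h\<close> by (auto simp: e_def h_def)
  qed (use \<open>a < e\<close> \<open>u a = 0\<close> \<open>u b = 0\<close> \<open>u d = 0\<close> nz_bd in \<open>auto simp: e_def h_def\<close>)
  then show False using nz_ab \<open>e < b\<close> by auto
qed

definition prolate_potential :: "real \<Rightarrow> real \<Rightarrow> real \<Rightarrow> real" where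
  "prolate_potential c chi t = c\<^sup>2 + (c\<^sup>2 - chi) / (t\<^sup>2 - 1) + 1 / (t\<^sup>2 - 1)\<^sup>2"

lemma prolate_potential_gt:
  assumes "chi < c\<^sup>2" "1 < t"
  shows "c\<^sup>2 < prolate_potential c chi t"
proof -
  have "0 < t\<^sup>2 - 1" using one_less_power[OF \<open>1 < t\<close>, of 2] by simp
  then show ?thesis using assms(1) by (simp add: prolate_potential_def add_pos_pos)
qed

lemma prolate_potential_strict_antimono:
  assumes "chi < c\<^sup>2"
  shows "strict_antimono_on {1<..} (prolate_potential c chi)"
proof (rule monotone_onI)
  fix s t :: real assume "s \<in> {1<..}" "t \<in> {1<..}" "s < t"
  then have s: "0 < s\<^sup>2 - 1" and st: "s\<^sup>2 - 1 < t\<^sup>2 - 1"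
    using one_less_power[of s 2] power_strict_mono[of s t 2] by auto
  have "(c\<^sup>2 - chi) / (t\<^sup>2 - 1) < (c\<^sup>2 - chi) / (s\<^sup>2 - 1)"
    using divide_strict_left_mono[OF st, of "c\<^sup>2 - chi"] s st assms by simp
  moreover have "(s\<^sup>2 - 1)\<^sup>2 < (t\<^sup>2 - 1)\<^sup>2"
    using power_strict_mono[OF st] s by simp
  then have "1 / (t\<^sup>2 - 1)\<^sup>2 < 1 / (s\<^sup>2 - 1)\<^sup>2"
    using s st by (intro divide_strict_left_mono) auto
  ultimately show "prolate_potential c chi t < prolate_potential c chi s"
    by (simp add: prolate_potential_def)
qed

lemma prolate_normal_form_derivs:
  fixes p p' p'' :: "real \<Rightarrow> real"
  assumes "1 < t" and dp: "(p has_real_derivative p' t) (at t)"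
    and dp': "(p' has_real_derivative p'' t) (at t)"
    and ode: "(1 - t\<^sup>2) * p'' t - 2 * t * p' t + (chi - c\<^sup>2 * t\<^sup>2) * p t = 0"
  shows "((\<lambda>t. sqrt (t\<^sup>2 - 1) * p t) has_real_derivative
           t / sqrt (t\<^sup>2 - 1) * p t + sqrt (t\<^sup>2 - 1) * p' t) (at t)"
    and "((\<lambda>t. t / sqrt (t\<^sup>2 - 1) * p t + sqrt (t\<^sup>2 - 1) * p' t) has_real_derivative
           - (prolate_potential c chi t * (sqrt (t\<^sup>2 - 1) * p t))) (at t)"
proof -
  define s where "s = sqrt (t\<^sup>2 - 1)"
  have "0 < t\<^sup>2 - 1" using one_less_power[OF \<open>1 < t\<close>, of 2] by simp
  then have "0 < s" and s2: "s\<^sup>2 = t\<^sup>2 - 1" by (simp_all add: s_def)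
  have ds: "((\<lambda>t. sqrt (t\<^sup>2 - 1)) has_real_derivative t / s) (at t)"
    using \<open>0 < t\<^sup>2 - 1\<close> unfolding s_def by (auto intro!: derivative_eq_intros simp: field_simps)
  have "((\<lambda>t. t / sqrt (t\<^sup>2 - 1)) has_real_derivative (s - t * (t / s)) / s\<^sup>2) (at t)"
    using DERIV_divide[OF DERIV_ident ds] \<open>0 < s\<close> by (simp add: s_def)
  moreover have "t * t = s\<^sup>2 + 1" using s2 by (simp add: power2_eq_square)
  then have "(s - t * (t / s)) / s\<^sup>2 = - 1 / s ^ 3"
    using \<open>0 < s\<close> by (simp add: field_simps power2_eq_square power3_eq_cube)
  ultimately have dr: "((\<lambda>t. t / sqrt (t\<^sup>2 - 1)) has_real_derivative - 1 / s ^ 3) (at t)"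
    by simp
  show "((\<lambda>t. sqrt (t\<^sup>2 - 1) * p t) has_real_derivative
      t / sqrt (t\<^sup>2 - 1) * p t + sqrt (t\<^sup>2 - 1) * p' t) (at t)"
    using DERIV_mult[OF ds dp] by (simp add: s_def algebra_simps)
  have p'': "p'' t = - (2 * t * p' t + (c\<^sup>2 * (s\<^sup>2 + 1) - chi) * p t) / s\<^sup>2"
  proof -
    have "t\<^sup>2 = s\<^sup>2 + 1" using s2 by simp
    then show ?thesis using ode \<open>0 < s\<close> by (simp add: field_simps)
  qed
  have eq: "- 1 / s ^ 3 * p t + t / s * p' t + (t / s * p' t + s * p'' t)
      = - (prolate_potential c chi t * (s * p t))"
    unfolding p'' prolate_potential_def s2[symmetric]
    using \<open>0 < s\<close> by (simp add: field_simps power2_eq_square power3_eq_cube)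
  have "((\<lambda>t. t / sqrt (t\<^sup>2 - 1) * p t + sqrt (t\<^sup>2 - 1) * p' t) has_real_derivative
      - 1 / s ^ 3 * p t + t / s * p' t + (t / s * p' t + s * p'' t)) (at t)"
    using DERIV_add[OF DERIV_mult[OF dr dp] DERIV_mult[OF ds dp']]
    by (rule DERIV_cong) (simp add: s_def algebra_simps)
  then show "((\<lambda>t. t / sqrt (t\<^sup>2 - 1) * p t + sqrt (t\<^sup>2 - 1) * p' t) has_real_derivative
      - (prolate_potential c chi t * (sqrt (t\<^sup>2 - 1) * p t))) (at t)"
    by (simp only: eq) (simp add: s_def)
qed

lemma pswf_normal_form_derivs:
  assumes "pswf_system c \<psi> lam chi" "1 < t"
  shows "((\<lambda>t. sqrt (t\<^sup>2 - 1) * \<psi> n t) has_real_derivative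
           t / sqrt (t\<^sup>2 - 1) * \<psi> n t + sqrt (t\<^sup>2 - 1) * deriv (\<psi> n) t) (at t)"
    and "((\<lambda>t. t / sqrt (t\<^sup>2 - 1) * \<psi> n t + sqrt (t\<^sup>2 - 1) * deriv (\<psi> n) t)
           has_real_derivative - (prolate_potential c (chi n) t * (sqrt (t\<^sup>2 - 1) * \<psi> n t))) (at t)"
proof -
  have "\<psi> n differentiable (at t)" "deriv (\<psi> n) differentiable (at t)"
    and "(1 - t\<^sup>2) * deriv (deriv (\<psi> n)) t - 2 * t * deriv (\<psi> n) t
           + (chi n - c\<^sup>2 * t\<^sup>2) * \<psi> n t = 0"
    using assms(1) unfolding pswf_system_def by blast+
  then show "((\<lambda>t. sqrt (t\<^sup>2 - 1) * \<psi> n t) has_real_derivative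
           t / sqrt (t\<^sup>2 - 1) * \<psi> n t + sqrt (t\<^sup>2 - 1) * deriv (\<psi> n) t) (at t)"
    and "((\<lambda>t. t / sqrt (t\<^sup>2 - 1) * \<psi> n t + sqrt (t\<^sup>2 - 1) * deriv (\<psi> n) t)
           has_real_derivative - (prolate_potential c (chi n) t * (sqrt (t\<^sup>2 - 1) * \<psi> n t))) (at t)"
    using prolate_normal_form_derivs[OF \<open>1 < t\<close>] DERIV_deriv_iff_real_differentiable by blast+
qed

lemma strict_mono_not_in_range_between_Suc:
  fixes x :: "nat \<Rightarrow> 'a::linorder"
  assumes "strict_mono x" "x k < t" "t < x (Suc k)"
  shows "t \<notin> range x"
proof
  assume "t \<in> range x"
  then obtain j where "t = x j" by blast
  then have "k < j" "j < Suc k" using assms strict_mono_less by blast+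
  then show False by simp
qed

theorem theorem33:
  fixes c :: real and \<psi> :: "nat \<Rightarrow> real \<Rightarrow> real" and lam :: "nat \<Rightarrow> complex"
    and chi :: "nat \<Rightarrow> real" and n :: nat and x :: "nat \<Rightarrow> real"
  assumes "pswf_system c \<psi> lam chi"
    and "chi n < c^2"
    and "strict_mono x"
    and "range x = {t. 1 < t \<and> \<psi> n t = 0}"
  shows "\<forall>k. x (Suc k) - x k \<le> x (Suc (Suc k)) - x (Suc k) \<and> x (Suc k) - x k \<le> pi / c"
proof
  fix k
  define u where "u t = sqrt (t\<^sup>2 - 1) * \<psi> n t" for t
  define u' where "u' t = t / sqrt (t\<^sup>2 - 1) * \<psi> n t + sqrt (t\<^sup>2 - 1) * deriv (\<psi> n) t" for t
  define Q where "Q = prolate_potential c (chi n)"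
  have x_gt_1: "1 < x j" and u_x: "u (x j) = 0" for j
    using assms(4) by (auto simp: u_def)
  have x_less: "x j < x (Suc j)" for j using assms(3) by (simp add: strict_mono_Suc_iff)
  have du: "\<forall>t\<in>{x k..b}. (u has_real_derivative u' t) (at t)"
    and du': "\<forall>t\<in>{x k..b}. (u' has_real_derivative - (Q t * u t)) (at t)" for b
    using pswf_normal_form_derivs[OF assms(1)] x_gt_1[of k]
    unfolding u_def[abs_def] u'_def[abs_def] Q_def by auto
  have u_nz: "\<forall>t\<in>{x j<..<x (Suc j)}. u t \<noteq> 0" for j
    using strict_mono_not_in_range_between_Suc[OF assms(3), of j] assms(4) x_gt_1[of j]
    by (auto simp: u_def power2_eq_1_iff)
  have "strict_antimono_on {x k..x (Suc (Suc k))} Q"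
    using monotone_on_subset[OF prolate_potential_strict_antimono[OF assms(2)]] x_gt_1[of k]
    by (simp add: Q_def subset_eq)
  then have "x (Suc k) - x k \<le> x (Suc (Suc k)) - x (Suc k)"
    using zero_gaps_nondecreasing[OF x_less x_less du du' _ u_x u_x u_x u_nz u_nz] by blast
  moreover have "x (Suc k) - x k \<le> pi / c"
  proof (rule zero_gap_le_pi_div[OF _ x_less du du' _ u_x u_nz])
    show "0 < c" using assms(1) by (simp add: pswf_system_def)
    show "\<forall>t\<in>{x k<..<x (Suc k)}. c\<^sup>2 < Q t"
      using prolate_potential_gt[OF assms(2)] x_gt_1[of k] by (auto simp: Q_def)
  qed
  ultimately show "x (Suc k) - x k \<le> x (Suc (Suc k)) - x (Suc k) \<and> x (Suc k) - x k \<le> pi / c"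
    by blast
qed

end
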